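(* Let $\epsilon>0$, let $G=(S,B,E)$ be a bipartite graph with weights $w:S\to\mathbb{R}_+$ and a fixed arrival order of $B$. Let $j\in S$ and let $G_{-j}$ be obtained from $G$ by deleting $j$. Fix $x\in[0,1]^S$, let $M$ be the matching produced by $\epsilon$-\textsc{Ranking} on $G$ with samples $x$, and $M_{-j}$ the matching produced by $\epsilon$-\textsc{Ranking} on $G_{-j}$ with samples $x$ restricted to $S\setminus\{j\}$. Then \[ w(M_{-j})-\frac{2}{\epsilon}w_j \le w(M)\le w(M_{-j})+w_j. \] Moreover, for every $i\in B$, the utility $u_i$ of $i$ in the run on $G$ is at least its utility in the run on $G_{-j}$.
   Context: Buyers $B$ arrive one at a time in the fixed order, each revealing its neighborhood $N(i)\subseteq S$. $\epsilon$-\textsc{Ranking} with samples $x\in[0,1]^S$: when buyer $i$ arrives, match $i$ to an unmatched $j\in N(i)$ maximizing $w_j(1-e^{x_j-1-\epsilon})$ (leave $i$ unmatched if none exists), with ties broken according to a fixed total order on $S$. For a matching $M$, $w(M)=\sum_{\{i,j\}\in M}w_j$ where $j\in S$. The utility of a buyer $i$ is $u_i=w_j(1-e^{x_j-1-\epsilon})$ if $i$ is matched to $j$, and $u_i=0$ if $i$ is unmatched. *)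

theory Defs
  imports Complex_Main
begin

definition price :: "real \<Rightarrow> ('s \<Rightarrow> real) \<Rightarrow> ('s \<Rightarrow> real) \<Rightarrow> 's \<Rightarrow> real" where
  "price eps w x k = w k * (1 - exp (x k - 1 - eps))"

text \<open>The fixed total order on sellers used for tie-breaking is given by an injective
  rank function rk: among sellers of maximal price, the one with smallest rank wins.\<close>
definition best :: "real \<Rightarrow> ('s \<Rightarrow> real) \<Rightarrow> ('s \<Rightarrow> real) \<Rightarrow> ('s \<Rightarrow> nat) \<Rightarrow> 's set \<Rightarrow> 's" where
  "best eps w x rk A = (THE j. j \<in> A \<and> (\<forall>k\<in>A. k \<noteq> j \<longrightarrow>
      price eps w x k < price eps w x j \<or>
      (price eps w x k = price eps w x j \<and> rk j < rk k)))"

definition ranking_step :: "real \<Rightarrow> ('s \<Rightarrow> real) \<Rightarrow> ('s \<Rightarrow> real) \<Rightarrow> ('s \<Rightarrow> nat) \<Rightarrow> 's set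
    \<Rightarrow> ('b \<Rightarrow> 's set) \<Rightarrow> 'b \<Rightarrow> ('b \<times> 's) set \<Rightarrow> ('b \<times> 's) set" where
  "ranking_step eps w x rk S N i M =
     (let A = {k \<in> N i \<inter> S. k \<notin> snd ` M}
      in if A = {} then M else insert (i, best eps w x rk A) M)"

definition ranking :: "real \<Rightarrow> ('s \<Rightarrow> real) \<Rightarrow> ('s \<Rightarrow> real) \<Rightarrow> ('s \<Rightarrow> nat) \<Rightarrow> 's set
    \<Rightarrow> ('b \<Rightarrow> 's set) \<Rightarrow> 'b list \<Rightarrow> ('b \<times> 's) set" where
  "ranking eps w x rk S N bs = fold (ranking_step eps w x rk S N) bs {}"

definition weight :: "('s \<Rightarrow> real) \<Rightarrow> ('b \<times> 's) set \<Rightarrow> real" where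
  "weight w M = (\<Sum>p\<in>M. w (snd p))"

definition utility :: "real \<Rightarrow> ('s \<Rightarrow> real) \<Rightarrow> ('s \<Rightarrow> real) \<Rightarrow> ('b \<times> 's) set \<Rightarrow> 'b \<Rightarrow> real" where
  "utility eps w x M i = (if \<exists>k. (i, k) \<in> M then price eps w x (THE k. (i, k) \<in> M) else 0)"

end

theory Submission
  imports Defs
begin

text \<open>By induction over the arrivals, the
  unmatched sellers of the run on \<open>G\<close> are those of the run on \<open>G\<^sub>-\<^sub>j\<close> plus at most one extra
  seller \<open>a\<close>, initially \<open>j\<close>; while it exists, \<open>price a \<le> price j\<close> and
  \<open>w(M) + w\<^sub>a = w(M\<^sub>-\<^sub>j) + w\<^sub>j\<close>, and afterwards \<open>w(M) = w(M\<^sub>-\<^sub>j) + w\<^sub>j\<close>. A buyer who takes \<open>a\<close> in \<open>G\<close> is matched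
  in \<open>G\<^sub>-\<^sub>j\<close> either to a seller of no larger price, which becomes the new \<open>a\<close>, or to nobody,
  and then \<open>a\<close> disappears; every other choice is the same in both runs.
  Since \<open>w\<^sub>a (1 - e\<^sup>-\<^sup>\<epsilon>) \<le> price a \<le> price j \<le> w\<^sub>j\<close> and \<open>1 - e\<^sup>-\<^sup>\<epsilon> \<ge> \<epsilon>/(1+\<epsilon>)\<close>, we get
  \<open>w\<^sub>a \<le> (1 + 1/\<epsilon>) w\<^sub>j\<close>, which gives the weight bounds. The unmatched neighbours of an arriving
  buyer in \<open>G\<^sub>-\<^sub>j\<close> are among those in \<open>G\<close>, so its price, i.e. its utility, is at least as
  high in \<open>G\<close>.\<close>

definition is_best :: "real \<Rightarrow> ('s \<Rightarrow> real) \<Rightarrow> ('s \<Rightarrow> real) \<Rightarrow> ('s \<Rightarrow> nat)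
    \<Rightarrow> 's set \<Rightarrow> 's \<Rightarrow> bool" where
  "is_best eps w x rk A b \<longleftrightarrow> b \<in> A \<and> (\<forall>k\<in>A. k \<noteq> b \<longrightarrow>
      price eps w x k < price eps w x b \<or>
      (price eps w x k = price eps w x b \<and> rk b < rk k))"

lemma is_best_unique: "is_best eps w x rk A b \<Longrightarrow> is_best eps w x rk A b' \<Longrightarrow> b' = b"
  unfolding is_best_def by (metis less_asym order_less_irrefl)

lemma best_eqI: "is_best eps w x rk A b \<Longrightarrow> best eps w x rk A = b"
  unfolding best_def is_best_def[symmetric] by (blast intro: the_equality is_best_unique)

lemma is_best_best:
  assumes "finite A" "A \<noteq> {}" "inj_on rk A"
  shows "is_best eps w x rk A (best eps w x rk A)"
proof -
  let ?p = "price eps w x"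
  define T where "T = {k \<in> A. ?p k = Max (?p ` A)}"
  have "Max (?p ` A) \<in> ?p ` A" using assms(1,2) by simp
  then have "finite T" "T \<noteq> {}" unfolding T_def using assms(1) by auto
  then have "Min (rk ` T) \<in> rk ` T" by simp
  then obtain b where b: "b \<in> T" "rk b = Min (rk ` T)" by auto
  have "is_best eps w x rk A b" unfolding is_best_def
  proof (intro conjI ballI impI)
    show "b \<in> A" using b(1) T_def by auto
    fix k assume k: "k \<in> A" "k \<noteq> b"
    have "?p k \<le> ?p b" using b(1) k(1) assms(1) by (simp add: T_def)
    moreover have "rk b < rk k" if "?p k = ?p b"
    proof -
      have "k \<in> T" using that b(1) k(1) by (simp add: T_def)
      then have "rk b \<le> rk k" using b(2) \<open>finite T\<close> by simp
      moreover have "rk b \<noteq> rk k" using assms(3) k \<open>b \<in> A\<close> by (auto dest: inj_onD)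
      ultimately show ?thesis by simp
    qed
    ultimately show "?p k < ?p b \<or> (?p k = ?p b \<and> rk b < rk k)" by force
  qed
  then show ?thesis by (simp add: best_eqI)
qed

lemma best_in:
  assumes "finite A" "A \<noteq> {}" "inj_on rk A"
  shows "best eps w x rk A \<in> A"
  using is_best_best[OF assms] by (simp add: is_best_def)

lemma price_le_price_best:
  assumes "finite A" "inj_on rk A" "k \<in> A"
  shows "price eps w x k \<le> price eps w x (best eps w x rk A)"
  using is_best_best[OF assms(1) _ assms(2), of eps w x] assms(3)
  unfolding is_best_def by force

lemma best_subset_eq:
  assumes "finite A" "inj_on rk A" "A' \<subseteq> A" "best eps w x rk A \<in> A'"
  shows "best eps w x rk A' = best eps w x rk A"
  using is_best_best[OF assms(1) _ assms(2), of eps w x] assms(3,4)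
  by (intro best_eqI) (auto simp: is_best_def)

definition unmatched :: "'s set \<Rightarrow> ('b \<times> 's) set \<Rightarrow> 's set" where
  "unmatched S M = S - snd ` M"

lemma unmatched_insert: "unmatched S (insert (i, b) M) = unmatched S M - {b}"
  by (auto simp: unmatched_def)

lemma weight_insert:
  assumes "finite M" "i \<notin> fst ` M"
  shows "weight w (insert (i, b) M) = weight w M + w b"
proof -
  have "(i, b) \<notin> M" using assms(2) by force
  then show ?thesis using assms(1) by (simp add: weight_def)
qed

lemma ranking_step_eq:
  "ranking_step eps w x rk S N i M =
     (if N i \<inter> unmatched S M = {} then M
      else insert (i, best eps w x rk (N i \<inter> unmatched S M)) M)"
proof -
  have "{k \<in> N i \<inter> S. k \<notin> snd ` M} = N i \<inter> unmatched S M" by (auto simp: unmatched_def)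
  then show ?thesis by (simp add: ranking_step_def)
qed

lemma finite_inj_on_candidates:
  assumes "finite S" "inj_on rk S"
  shows "finite (N i \<inter> unmatched S M)" "inj_on rk (N i \<inter> unmatched S M)"
  using assms by (auto simp: unmatched_def intro: finite_subset inj_on_subset)

lemma ranking_Nil [simp]: "ranking eps w x rk S N [] = {}"
  by (simp add: ranking_def)

lemma ranking_snoc [simp]:
  "ranking eps w x rk S N (bs @ [i]) = ranking_step eps w x rk S N i (ranking eps w x rk S N bs)"
  by (simp add: ranking_def)

lemma finite_ranking: "finite (ranking eps w x rk S N bs)"
  by (induction bs rule: rev_induct) (simp_all add: ranking_step_eq)

lemma fst_ranking_subset: "fst ` ranking eps w x rk S N bs \<subseteq> set bs"
  by (induction bs rule: rev_induct) (auto simp: ranking_step_eq)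

lemma snd_ranking_subset:
  assumes "finite S" "inj_on rk S"
  shows "snd ` ranking eps w x rk S N bs \<subseteq> S"
proof (induction bs rule: rev_induct)
  case (snoc i bs)
  let ?C = "N i \<inter> unmatched S (ranking eps w x rk S N bs)"
  have "?C \<noteq> {} \<Longrightarrow> best eps w x rk ?C \<in> ?C"
    using best_in finite_inj_on_candidates[OF assms] by metis
  with snoc.IH show ?case by (auto simp: ranking_step_eq unmatched_def)
qed simp

lemma single_valued_ranking:
  assumes "distinct bs"
  shows "single_valued (ranking eps w x rk S N bs)"
  using assms
proof (induction bs rule: rev_induct)
  case (snoc i bs)
  have "(i, k) \<notin> ranking eps w x rk S N bs" for k
    using fst_ranking_subset snoc.prems by fastforce
  with snoc show ?case by (auto simp: ranking_step_eq single_valued_def)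
qed simp

definition coupled :: "real \<Rightarrow> ('s \<Rightarrow> real) \<Rightarrow> ('s \<Rightarrow> real) \<Rightarrow> 's set \<Rightarrow> 's
    \<Rightarrow> ('b \<times> 's) set \<Rightarrow> ('b \<times> 's) set \<Rightarrow> bool" where
  "coupled eps w x S j M M' \<longleftrightarrow>
     (\<exists>a. unmatched S M = insert a (unmatched (S - {j}) M') \<and> a \<notin> unmatched (S - {j}) M'
        \<and> price eps w x a \<le> price eps w x j \<and> weight w M + w a = weight w M' + w j) \<or>
     (unmatched S M = unmatched (S - {j}) M' \<and> weight w M = weight w M' + w j)"

lemma coupled_unmatched_subset:
  "coupled eps w x S j M M' \<Longrightarrow> unmatched (S - {j}) M' \<subseteq> unmatched S M"
  unfolding coupled_def by blast

lemma coupled_empty: "j \<in> S \<Longrightarrow> coupled eps w x S j {} {}"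
  unfolding coupled_def unmatched_def by (auto intro!: exI[of _ j])

lemma coupledE:
  assumes "coupled eps w x S j M M'"
  obtains (equal) "unmatched S M = unmatched (S - {j}) M'" "weight w M = weight w M' + w j"
    | (extra) a where "unmatched S M = insert a (unmatched (S - {j}) M')"
      "a \<notin> unmatched (S - {j}) M'" "price eps w x a \<le> price eps w x j"
      "weight w M + w a = weight w M' + w j"
  using assms unfolding coupled_def by blast

lemma coupled_weight_cases:
  assumes "coupled eps w x S j M M'"
  obtains (equal) "weight w M = weight w M' + w j"
    | (extra) a where "a \<in> S" "price eps w x a \<le> price eps w x j"
      "weight w M + w a = weight w M' + w j"
  using assms by (cases rule: coupledE) (auto simp: unmatched_def)

lemma coupled_insert_same:
  assumes "coupled eps w x S j M M'" "b \<in> unmatched (S - {j}) M'"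
    and "finite M" "finite M'" "i \<notin> fst ` M" "i \<notin> fst ` M'"
  shows "coupled eps w x S j (insert (i, b) M) (insert (i, b) M')"
  using assms(1)
proof (cases rule: coupledE)
  case equal
  then show ?thesis
    using weight_insert[OF assms(3,5)] weight_insert[OF assms(4,6)]
    by (simp add: coupled_def unmatched_insert)
next
  case (extra a)
  moreover have "a \<noteq> b" using extra(2) assms(2) by blast
  ultimately show ?thesis
    using weight_insert[OF assms(3,5)] weight_insert[OF assms(4,6)]
    unfolding coupled_def unmatched_insert by (intro disjI1 exI[of _ a]) auto
qed

lemma coupled_insert_extra:
  assumes "coupled eps w x S j M M'" "b \<in> unmatched S M" "b \<notin> unmatched (S - {j}) M'"
    and "finite M" "i \<notin> fst ` M"
  shows "coupled eps w x S j (insert (i, b) M) M'"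
  using assms(1)
proof (cases rule: coupledE)
  case equal
  then show ?thesis using assms(2,3) by simp
next
  case (extra a)
  then have "a = b" using assms(2,3) by auto
  then show ?thesis
    using extra weight_insert[OF assms(4,5)] by (simp add: coupled_def unmatched_insert)
qed

lemma coupled_insert_swap:
  assumes "coupled eps w x S j M M'" "b \<in> unmatched S M" "b \<notin> unmatched (S - {j}) M'"
    and "b' \<in> unmatched (S - {j}) M'" "price eps w x b' \<le> price eps w x b"
    and "finite M" "finite M'" "i \<notin> fst ` M" "i \<notin> fst ` M'"
  shows "coupled eps w x S j (insert (i, b) M) (insert (i, b') M')"
  using assms(1)
proof (cases rule: coupledE)
  case equal
  then show ?thesis using assms(2,3) by simp
next
  case (extra a)
  then have "a = b" using assms(2,3) by auto
  then have "unmatched S M - {b} = insert b' (unmatched (S - {j}) M' - {b'})"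
    using extra(1,2) assms(4) by blast
  moreover have "price eps w x b' \<le> price eps w x j" using extra(3) assms(5) \<open>a = b\<close> by simp
  ultimately show ?thesis
    using extra(4) \<open>a = b\<close> weight_insert[OF assms(6,8)] weight_insert[OF assms(7,9)]
    unfolding coupled_def unmatched_insert by (intro disjI1 exI[of _ b']) auto
qed

lemma coupled_ranking_step:
  assumes coupled: "coupled eps w x S j M M'"
    and "finite M" "finite M'" "i \<notin> fst ` M" "i \<notin> fst ` M'" "finite S" "inj_on rk S"
  shows "coupled eps w x S j (ranking_step eps w x rk S N i M)
           (ranking_step eps w x rk (S - {j}) N i M')"
proof -
  let ?best = "best eps w x rk"
  define C C' where "C = N i \<inter> unmatched S M" and "C' = N i \<inter> unmatched (S - {j}) M'"
  have step: "ranking_step eps w x rk S N i M = (if C = {} then M else insert (i, ?best C) M)"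
    and step': "ranking_step eps w x rk (S - {j}) N i M' =
      (if C' = {} then M' else insert (i, ?best C') M')"
    by (simp_all add: ranking_step_eq C_def C'_def)
  have C: "finite C" "inj_on rk C"
    using finite_inj_on_candidates[OF assms(6,7)] by (simp_all add: C_def)
  have "C' \<subseteq> C" using coupled_unmatched_subset[OF coupled] by (auto simp: C_def C'_def)
  then have C': "finite C'" "inj_on rk C'" using C finite_subset inj_on_subset by blast+
  consider (idle) "C = {}" | (same) "?best C \<in> C'" | (extra) "C \<noteq> {}" "?best C \<notin> C'"
    by blast
  then show ?thesis
  proof cases
    case idle
    then show ?thesis using coupled \<open>C' \<subseteq> C\<close> by (simp add: step step')
  next
    case same
    then have "?best C' = ?best C" "C \<noteq> {}"
      using best_subset_eq[OF C \<open>C' \<subseteq> C\<close>] \<open>C' \<subseteq> C\<close> by auto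
    with same show ?thesis using coupled_insert_same[OF coupled _ assms(2-5)]
      by (auto simp: step step' C'_def)
  next
    case extra
    then have b: "?best C \<in> unmatched S M" "?best C \<notin> unmatched (S - {j}) M'"
      using best_in[OF C(1) _ C(2)] by (auto simp: C_def C'_def)
    show ?thesis
    proof (cases "C' = {}")
      case True
      then show ?thesis using coupled_insert_extra[OF coupled b assms(2,4)] extra(1)
        by (simp add: step step')
    next
      case False
      then have "?best C' \<in> C'" using best_in[OF C'(1) _ C'(2)] by blast
      then have "?best C' \<in> unmatched (S - {j}) M'"
        "price eps w x (?best C') \<le> price eps w x (?best C)"
        using price_le_price_best[OF C, of "?best C'"] \<open>C' \<subseteq> C\<close> by (auto simp: C'_def)
      then show ?thesis using coupled_insert_swap[OF coupled b _ _ assms(2-5)] extra(1) False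
        by (simp add: step step')
    qed
  qed
qed

definition price_dominates :: "real \<Rightarrow> ('s \<Rightarrow> real) \<Rightarrow> ('s \<Rightarrow> real)
    \<Rightarrow> ('b \<times> 's) set \<Rightarrow> ('b \<times> 's) set \<Rightarrow> bool" where
  "price_dominates eps w x M M' \<longleftrightarrow>
     (\<forall>(i, k)\<in>M'. \<exists>k'. (i, k') \<in> M \<and> price eps w x k \<le> price eps w x k')"

lemma price_dominates_ranking_step:
  assumes "price_dominates eps w x M M'" "unmatched T M' \<subseteq> unmatched S M"
    and "finite S" "inj_on rk S"
  shows "price_dominates eps w x (ranking_step eps w x rk S N i M) (ranking_step eps w x rk T N i M')"
proof -
  let ?best = "best eps w x rk"
  define C C' where "C = N i \<inter> unmatched S M" and "C' = N i \<inter> unmatched T M'"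
  have step: "ranking_step eps w x rk S N i M = (if C = {} then M else insert (i, ?best C) M)"
    and step': "ranking_step eps w x rk T N i M' = (if C' = {} then M' else insert (i, ?best C') M')"
    by (simp_all add: ranking_step_eq C_def C'_def)
  have "C' \<subseteq> C" using assms(2) by (auto simp: C_def C'_def)
  have C: "finite C" "inj_on rk C"
    using finite_inj_on_candidates[OF assms(3,4)] by (simp_all add: C_def)
  then have C': "finite C'" "inj_on rk C'" using \<open>C' \<subseteq> C\<close> finite_subset inj_on_subset by blast+
  have better: "price eps w x (?best C') \<le> price eps w x (?best C)" if "C' \<noteq> {}"
    using price_le_price_best[OF C] best_in[OF C'(1) that C'(2)] \<open>C' \<subseteq> C\<close> by blast
  show ?thesis unfolding price_dominates_def
  proof safe
    fix i' k assume "(i', k) \<in> ranking_step eps w x rk T N i M'"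
    then consider "(i', k) \<in> M'" | "C' \<noteq> {}" "i' = i" "k = ?best C'"
      by (auto simp: step' split: if_splits)
    then show "\<exists>k'. (i', k') \<in> ranking_step eps w x rk S N i M \<and> price eps w x k \<le> price eps w x k'"
    proof cases
      case 1
      then show ?thesis using assms(1) by (force simp: price_dominates_def step)
    next
      case 2
      then show ?thesis using better \<open>C' \<subseteq> C\<close> by (auto simp: step)
    qed
  qed
qed

lemma coupled_ranking:
  assumes "distinct bs" "finite S" "inj_on rk S" "j \<in> S"
  shows "coupled eps w x S j (ranking eps w x rk S N bs) (ranking eps w x rk (S - {j}) N bs)
    \<and> price_dominates eps w x (ranking eps w x rk S N bs) (ranking eps w x rk (S - {j}) N bs)"
  using assms(1)
proof (induction bs rule: rev_induct)
  case Nil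
  show ?case using coupled_empty[OF assms(4)] by (simp add: price_dominates_def)
next
  case (snoc i bs)
  let ?M = "ranking eps w x rk S N bs" and ?M' = "ranking eps w x rk (S - {j}) N bs"
  from snoc have IH: "coupled eps w x S j ?M ?M'" "price_dominates eps w x ?M ?M'" by auto
  have "i \<notin> fst ` ?M" "i \<notin> fst ` ?M'" using fst_ranking_subset snoc.prems by fastforce+
  then show ?case
    using coupled_ranking_step[OF IH(1) finite_ranking finite_ranking _ _ assms(2,3)]
      price_dominates_ranking_step[OF IH(2) coupled_unmatched_subset[OF IH(1)] assms(2,3)]
    by simp
qed

lemma price_nonneg: "0 \<le> w k \<Longrightarrow> x k \<le> 1 + eps \<Longrightarrow> 0 \<le> price eps w x k"
  by (simp add: price_def)

lemma price_le_weight: "0 \<le> w k \<Longrightarrow> price eps w x k \<le> w k"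
  unfolding price_def by (rule mult_left_le) auto

lemma weight_mult_le_price:
  "0 \<le> w k \<Longrightarrow> x k \<le> 1 \<Longrightarrow> w k * (1 - exp (- eps)) \<le> price eps w x k"
  unfolding price_def by (intro mult_left_mono) auto

lemma one_minus_exp_neg_ge: "0 \<le> (t::real) \<Longrightarrow> t / (1 + t) \<le> 1 - exp (- t)"
proof -
  assume "0 \<le> t"
  have "exp (- t) * (1 + t) \<le> exp (- t) * exp t"
    using exp_ge_add_one_self[of t] by (intro mult_left_mono) auto
  then have "t \<le> (1 - exp (- t)) * (1 + t)" by (simp add: exp_minus algebra_simps)
  then show ?thesis using \<open>0 \<le> t\<close> by (simp add: pos_divide_le_eq)
qed

lemma weight_le_of_price_le:
  assumes "0 \<le> w a" "x a \<le> 1" "0 \<le> w j" "0 < eps"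
    and "price eps w x a \<le> price eps w x j"
  shows "w a \<le> w j + w j / eps"
proof -
  have "w a * (eps / (1 + eps)) \<le> w a * (1 - exp (- eps))"
    using one_minus_exp_neg_ge[of eps] assms(1,4) by (intro mult_left_mono) auto
  also have "\<dots> \<le> w j"
    using weight_mult_le_price[of w a x eps, OF assms(1,2)] assms(5)
      price_le_weight[of w j eps x, OF assms(3)] by linarith
  finally have "w a * eps \<le> w j * (1 + eps)" using assms(4) by (simp add: pos_divide_le_eq)
  then have "w a \<le> w j * (1 + eps) / eps" using assms(4) by (simp add: pos_le_divide_eq)
  also have "\<dots> = w j + w j / eps" using assms(4) by (simp add: distrib_left add_divide_distrib)
  finally show ?thesis .
qed

lemma coupled_weight_bounds:
  assumes "coupled eps w x S j M M'" "\<forall>k\<in>S. 0 \<le> w k \<and> x k \<le> 1" "j \<in> S" "0 < eps"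
  shows "weight w M' - w j / eps \<le> weight w M" "weight w M \<le> weight w M' + w j"
proof -
  obtain c where "weight w M + c = weight w M' + w j" "0 \<le> c" "c \<le> w j + w j / eps"
    using assms(1)
  proof (cases rule: coupled_weight_cases)
    case equal
    then show ?thesis using that[of 0] assms(2-4) by simp
  next
    case (extra a)
    then show ?thesis using that[of "w a"] weight_le_of_price_le[of w a x j eps] assms(2-4) by auto
  qed
  then show "weight w M' - w j / eps \<le> weight w M" "weight w M \<le> weight w M' + w j" by linarith+
qed

lemma price_nonneg_ranking:
  assumes "finite S" "inj_on rk S" "(i, k) \<in> ranking eps w x rk S N bs"
    and "\<forall>k\<in>S. 0 \<le> w k \<and> x k \<le> 1 + eps"
  shows "0 \<le> price eps w x k"
proof -
  have "k \<in> S" using snd_ranking_subset[OF assms(1,2)] assms(3) by force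
  then show ?thesis using assms(4) by (simp add: price_nonneg)
qed

lemma utility_eq: "single_valued M \<Longrightarrow> (i, k) \<in> M \<Longrightarrow> utility eps w x M i = price eps w x k"
proof -
  assume "single_valued M" "(i, k) \<in> M"
  then have "(THE k. (i, k) \<in> M) = k" by (blast dest: single_valuedD)
  then show ?thesis using \<open>(i, k) \<in> M\<close> by (auto simp: utility_def)
qed

lemma utility_le_utility:
  assumes "single_valued M" "single_valued M'" "price_dominates eps w x M M'"
    and "\<forall>(i, k)\<in>M. 0 \<le> price eps w x k"
  shows "utility eps w x M' i \<le> utility eps w x M i"
proof (cases "\<exists>k. (i, k) \<in> M'")
  case True
  then obtain k k' where "(i, k) \<in> M'" "(i, k') \<in> M" "price eps w x k \<le> price eps w x k'"
    using assms(3) unfolding price_dominates_def by blast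
  then show ?thesis using utility_eq[OF assms(2), of i k] utility_eq[OF assms(1), of i k'] by simp
next
  case False
  then have "utility eps w x M' i = 0" by (simp add: utility_def)
  moreover have "0 \<le> utility eps w x M i"
  proof (cases "\<exists>k. (i, k) \<in> M")
    case True
    then obtain k where k: "(i, k) \<in> M" by blast
    then have "0 \<le> price eps w x k" using assms(4) by blast
    then show ?thesis using utility_eq[OF assms(1) k] by simp
  qed (simp add: utility_def)
  ultimately show ?thesis by simp
qed

theorem lemma6:
  fixes S :: "'s set" and B :: "'b list" and N :: "'b \<Rightarrow> 's set"
    and w x :: "'s \<Rightarrow> real" and rk :: "'s \<Rightarrow> nat" and eps :: real and j :: 's
  assumes "finite S" and "distinct B" and "\<forall>i\<in>set B. N i \<subseteq> S"
    and "\<forall>k\<in>S. w k \<ge> 0" and "inj_on rk S" and "eps > 0"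
    and "\<forall>k\<in>S. x k \<in> {0..1}" and "j \<in> S"
  defines "M \<equiv> ranking eps w x rk S N B"
    and "Mj \<equiv> ranking eps w x rk (S - {j}) N B"
  shows "weight w Mj - 2 / eps * w j \<le> weight w M \<and> weight w M \<le> weight w Mj + w j
    \<and> (\<forall>i\<in>set B. utility eps w x Mj i \<le> utility eps w x M i)"
proof -
  have coupled: "coupled eps w x S j M Mj" and dominates: "price_dominates eps w x M Mj"
    using coupled_ranking[OF assms(2,1,5,8)] by (simp_all add: M_def Mj_def)
  have w_x: "\<forall>k\<in>S. 0 \<le> w k \<and> x k \<le> 1" using assms(4,7) by simp
  have "w j / eps \<le> 2 / eps * w j" using assms(4,6,8) by (simp add: divide_right_mono)
  then have weights: "weight w Mj - 2 / eps * w j \<le> weight w M \<and> weight w M \<le> weight w Mj + w j"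
    using coupled_weight_bounds[OF coupled w_x assms(8,6)] by linarith
  have "single_valued M" "single_valued Mj"
    using single_valued_ranking[OF assms(2)] by (simp_all add: M_def Mj_def)
  moreover have "\<forall>(i, k)\<in>M. 0 \<le> price eps w x k"
    using price_nonneg_ranking[OF assms(1,5)] w_x assms(6) unfolding M_def by fastforce
  ultimately show ?thesis using weights utility_le_utility[OF _ _ dominates] by blast
qed

end
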